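(* Let $k:(0,\infty)\times(0,\infty)\to\mathbb{R}$ be a Borel-measurable kernel for which there exist $\alpha^*\in[0,1)$, $\varepsilon>0$ such that $K_T:=\sup_{0<t\le T}t^{\alpha^*-\frac1{1+\varepsilon}}\|k(t,\cdot)\|_{L^{1+\varepsilon}((0,t))}<\infty$ for every $T>0$. Then for any $\lambda\in\mathbb{C}$ and any $T>0$, the operator $\mathcal{R}_\lambda:B_b([0,T],\mathbb{C})\to B_b([0,T],\mathbb{C})$ defined by $(\mathcal{R}_\lambda g)(t):=1-\lambda\int_0^tk(t,s)g(s)ds$ for $t\in(0,T]$ and $(\mathcal{R}_\lambda g)(0):=1$ is well-defined (maps $B_b([0,T],\mathbb{C})$ into itself), and there exists $n_T\in\mathbb{N}$ such that $\mathcal{R}_\lambda^{n_T}$ is a strict contraction.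
   Context: $B_b([0,T],\mathbb{C})$ denotes the Banach space of bounded Borel-measurable complex-valued functions on $[0,T]$ with the supremum norm. *)

theory Defs
  imports "HOL-Analysis.Analysis"
begin

text \<open>The space B_b([0,T],C): bounded Borel functions on [0,T], represented as
  functions real => complex that vanish outside [0,T] (so that equality of
  elements is equality on [0,T]).\<close>
definition Bb :: "real \<Rightarrow> (real \<Rightarrow> complex) set" where
  "Bb T = {g. g \<in> borel_measurable (restrict_space borel {0..T})
             \<and> bounded (g ` {0..T})
             \<and> (\<forall>t. t \<notin> {0..T} \<longrightarrow> g t = 0)}"

definition supnorm :: "real \<Rightarrow> (real \<Rightarrow> complex) \<Rightarrow> real" where
  "supnorm T g = (SUP t\<in>{0..T}. norm (g t))"

definition Lp_int :: "(real \<Rightarrow> real \<Rightarrow> real) \<Rightarrow> real \<Rightarrow> real \<Rightarrow> ennreal" where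
  "Lp_int k p t = (\<integral>\<^sup>+ s. ennreal (\<bar>k t s\<bar> powr p) * indicator {0<..<t} s \<partial>lborel)"

definition R_op :: "(real \<Rightarrow> real \<Rightarrow> real) \<Rightarrow> complex \<Rightarrow> real \<Rightarrow> (real \<Rightarrow> complex) \<Rightarrow> real \<Rightarrow> complex" where
  "R_op k lam T g t =
     (if t = 0 then 1
      else if t \<in> {0<..T} then 1 - lam * (LINT s:{0<..<t}|lborel. complex_of_real (k t s) * g s)
      else 0)"

end

theory Submission
  imports Defs "HOL-Real_Asymp.Real_Asymp"
begin

text \<open>
  Work with the weighted sup norm \<open>sup t. exp (-\<sigma> t) |g t|\<close>. By Hoelder's inequality for
  \<open>p = 1 + \<epsilon>\<close> and its conjugate exponent \<open>q\<close>, the integral of \<open>|k t s| exp (\<sigma> (s - t))\<close>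
  over \<open>(0,t)\<close> is at most \<open>C t^(1/p - \<alpha>)\<close> times the \<open>L^q(0,t)\<close> norm of the weight. This norm
  is small uniformly in \<open>t \<in> (0,T]\<close> once \<sigma> is large, because it is at most \<open>t^(1/q)\<close> and the
  weight is negligible outside a short window below \<open>t\<close>. Choosing \<sigma> such that the integral is
  below \<open>1/(|\<lambda>| + 1)\<close> makes \<open>R\<^sub>\<lambda>\<close> a strict contraction for the weighted norm. Since the
  weighted norm and the sup norm differ at most by the factor \<open>exp (\<sigma> T)\<close>, a high enough
  iterate of \<open>R\<^sub>\<lambda>\<close> is a strict contraction for the sup norm.
\<close>

abbreviation volterra :: "(real \<Rightarrow> real \<Rightarrow> real) \<Rightarrow> (real \<Rightarrow> complex) \<Rightarrow> real \<Rightarrow> complex" where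
  "volterra k g t \<equiv> LINT s:{0<..<t}|lborel. complex_of_real (k t s) * g s"

lemma Bb_borel_measurable:
  assumes "g \<in> Bb T"
  shows "g \<in> borel_measurable borel"
proof -
  have "g \<in> borel_measurable (restrict_space borel {0..T})" and zero: "\<And>t. t \<notin> {0..T} \<Longrightarrow> g t = 0"
    using assms by (auto simp: Bb_def)
  then have "(\<lambda>x. indicator {0..T} x *\<^sub>R g x) \<in> borel_measurable borel"
    by (subst (asm) borel_measurable_restrict_space_iff) auto
  moreover have "(\<lambda>x. indicator {0..T} x *\<^sub>R g x) = g"
    using zero by (auto simp: indicator_def fun_eq_iff)
  ultimately show ?thesis by simp
qed

lemma Bb_normE:
  assumes "g \<in> Bb T"
  obtains M where "0 \<le> M" "\<And>s. norm (g s) \<le> M"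
proof -
  have "bounded (g ` {0..T})" using assms by (simp add: Bb_def)
  then obtain M where M: "\<forall>x\<in>g ` {0..T}. norm x \<le> M"
    unfolding bounded_iff by blast
  have "norm (g s) \<le> max M 0" for s
  proof (cases "s \<in> {0..T}")
    case True
    then show ?thesis using M by (metis image_eqI le_max_iff_disj)
  next
    case False
    then show ?thesis using assms by (simp add: Bb_def)
  qed
  then show thesis by (intro that[of "max M 0"]) auto
qed

lemma Bb_diff_bounded:
  assumes "g \<in> Bb T" "h \<in> Bb T"
  shows "bounded ((g - h) ` {0..T})"
proof -
  obtain M1 M2 where "\<And>s. norm (g s) \<le> M1" "\<And>s. norm (h s) \<le> M2"
    using Bb_normE assms by metis
  then have "norm ((g - h) s) \<le> M1 + M2" for s
    by (simp add: add_mono norm_triangle_le_diff)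
  then show ?thesis unfolding bounded_iff by blast
qed

lemma norm_le_supnorm:
  assumes "bounded (f ` {0..T})" "t \<in> {0..T}"
  shows "norm (f t) \<le> supnorm T f"
proof -
  obtain a where "\<forall>x\<in>f ` {0..T}. norm x \<le> a"
    using assms(1) bounded_iff by blast
  then have "bdd_above ((\<lambda>t. norm (f t)) ` {0..T})"
    by (intro bdd_aboveI2[where M = a]) auto
  then show ?thesis unfolding supnorm_def by (rule cSUP_upper[OF assms(2)])
qed

lemma supnorm_nonneg:
  assumes "0 \<le> T" "bounded (f ` {0..T})"
  shows "0 \<le> supnorm T f"
  using order_trans[OF norm_ge_zero norm_le_supnorm[OF assms(2), of 0]] assms(1) by simp

lemma supnorm_diff_nonneg:
  assumes "0 \<le> T" "g \<in> Bb T" "h \<in> Bb T"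
  shows "0 \<le> supnorm T (g - h)"
  using supnorm_nonneg[OF assms(1) Bb_diff_bounded[OF assms(2,3)]] .

lemma supnorm_le:
  assumes "0 \<le> T" "\<And>t. t \<in> {0..T} \<Longrightarrow> norm (f t) \<le> B"
  shows "supnorm T f \<le> B"
  unfolding supnorm_def using assms by (intro cSUP_least) auto

lemma nn_integral_Holder:
  fixes f g :: "'a \<Rightarrow> real" and p q a b :: real
  assumes pq: "1 < p" "1 < q" "1/p + 1/q = 1"
    and f: "f \<in> borel_measurable M" "\<And>x. 0 \<le> f x"
    and g: "g \<in> borel_measurable M" "\<And>x. 0 \<le> g x"
    and ab: "0 < a" "0 < b"
    and f_Lp: "(\<integral>\<^sup>+ x. ennreal (f x powr p) \<partial>M) \<le> ennreal (a powr p)"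
    and g_Lq: "(\<integral>\<^sup>+ x. ennreal (g x powr q) \<partial>M) \<le> ennreal (b powr q)"
  shows "(\<integral>\<^sup>+ x. ennreal (f x * g x) \<partial>M) \<le> ennreal (a * b)"
proof -
  define c1 where "c1 = a * b / (p * a powr p)"
  define c2 where "c2 = a * b / (q * b powr q)"
  have c: "0 \<le> c1" "0 \<le> c2" using ab pq by (auto simp: c1_def c2_def)
  have Young: "f x * g x \<le> c1 * f x powr p + c2 * g x powr q" for x
  proof -
    have "(f x / a) * (g x / b) \<le> (f x / a) powr p / p + (g x / b) powr q / q"
      using Youngs_inequality[OF pq, of "f x / a" "g x / b"] f g ab by auto
    then have "a * b * ((f x / a) * (g x / b)) \<le> a * b * ((f x / a) powr p / p + (g x / b) powr q / q)"
      using ab by (intro mult_left_mono) auto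
    then show ?thesis
      using ab f g by (simp add: powr_divide c1_def c2_def field_simps)
  qed
  have "(\<integral>\<^sup>+ x. ennreal (f x * g x) \<partial>M)
      \<le> (\<integral>\<^sup>+ x. ennreal c1 * ennreal (f x powr p) + ennreal c2 * ennreal (g x powr q) \<partial>M)"
    using Young c by (intro nn_integral_mono) (auto simp flip: ennreal_mult ennreal_plus)
  also have "\<dots> = ennreal c1 * (\<integral>\<^sup>+ x. ennreal (f x powr p) \<partial>M) + ennreal c2 * (\<integral>\<^sup>+ x. ennreal (g x powr q) \<partial>M)"
    using f g by (simp add: nn_integral_add nn_integral_cmult)
  also have "\<dots> \<le> ennreal c1 * ennreal (a powr p) + ennreal c2 * ennreal (b powr q)"
    using f_Lp g_Lq by (intro add_mono mult_left_mono) auto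
  also have "\<dots> = ennreal (c1 * a powr p + c2 * b powr q)"
    using c by (simp add: ennreal_mult ennreal_plus)
  also have "c1 * a powr p + c2 * b powr q = a * b * (1/p + 1/q)"
    using ab pq by (simp add: c1_def c2_def field_simps)
  finally show ?thesis using pq by simp
qed

lemma exp_weight_Lq_le_length:
  fixes q \<sigma> t :: real
  assumes "0 < q" "0 \<le> \<sigma>" "0 < t"
  shows "(\<integral>\<^sup>+ s. ennreal (exp (\<sigma> * (s - t)) powr q * indicator {0<..<t} s) \<partial>lborel) \<le> ennreal t"
proof -
  have "exp (\<sigma> * (s - t)) powr q \<le> 1" if "s < t" for s
    using assms that by (simp add: exp_powr_real mult_nonneg_nonpos mult_nonpos_nonneg)
  then have "(\<integral>\<^sup>+ s. ennreal (exp (\<sigma> * (s - t)) powr q * indicator {0<..<t} s) \<partial>lborel)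
      \<le> (\<integral>\<^sup>+ s. indicator {0<..<t} s \<partial>lborel)"
    by (intro nn_integral_mono) (auto simp: indicator_def)
  then show ?thesis using assms by simp
qed

lemma exp_weight_powr_le_window:
  fixes q \<sigma> s t \<tau> :: real
  assumes "0 \<le> q * \<sigma>"
  shows "exp (\<sigma> * (s - t)) powr q * indicator {0<..<t} s
           \<le> indicator {t - \<tau>..t} s + exp (- (q * \<sigma> * \<tau>)) * indicator {0<..<t} s"
proof -
  have weight: "exp (\<sigma> * (s - t)) powr q = exp (q * \<sigma> * (s - t))"
    by (simp add: exp_powr_real ac_simps)
  show ?thesis
  proof (cases "0 < s \<and> s < t")
    case False
    then show ?thesis by (auto simp: indicator_def)
  next
    case True
    show ?thesis
    proof (cases "t - \<tau> \<le> s")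
      case True
      have "exp (q * \<sigma> * (s - t)) \<le> 1"
        using assms \<open>0 < s \<and> s < t\<close> by (simp add: mult_nonneg_nonpos)
      then have "exp (q * \<sigma> * (s - t)) \<le> 1 + exp (- (q * \<sigma> * \<tau>))"
        using exp_ge_zero[of "- (q * \<sigma> * \<tau>)"] by linarith
      then show ?thesis
        using \<open>0 < s \<and> s < t\<close> True by (simp add: weight indicator_def)
    next
      case False
      have "exp (q * \<sigma> * (s - t)) \<le> exp (- (q * \<sigma> * \<tau>))"
        using mult_left_mono[of "s - t" "- \<tau>" "q * \<sigma>"] assms False by simp
      then show ?thesis
        using \<open>0 < s \<and> s < t\<close> False by (simp add: weight indicator_def)
    qed
  qed
qed

lemma exp_weight_Lq_le_window:
  fixes q \<sigma> \<tau> t T :: real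
  assumes "0 < q" "0 \<le> \<sigma>" "0 < \<tau>" "0 < t" "t \<le> T"
  shows "(\<integral>\<^sup>+ s. ennreal (exp (\<sigma> * (s - t)) powr q * indicator {0<..<t} s) \<partial>lborel)
           \<le> ennreal (\<tau> + T * exp (- (q * \<sigma> * \<tau>)))"
proof -
  define e where "e = exp (- (q * \<sigma> * \<tau>))"
  have "0 \<le> e" by (simp add: e_def)
  have "ennreal (exp (\<sigma> * (s - t)) powr q * indicator {0<..<t} s)
      \<le> indicator {t - \<tau>..t} s + ennreal e * indicator {0<..<t} s" for s
    using ennreal_leI[OF exp_weight_powr_le_window[of q \<sigma> s t \<tau>]] assms \<open>0 \<le> e\<close>
    by (simp add: e_def ennreal_plus ennreal_mult ennreal_indicator)
  then have "(\<integral>\<^sup>+ s. ennreal (exp (\<sigma> * (s - t)) powr q * indicator {0<..<t} s) \<partial>lborel)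
      \<le> (\<integral>\<^sup>+ s. indicator {t - \<tau>..t} s + ennreal e * indicator {0<..<t} s \<partial>lborel)"
    by (rule nn_integral_mono)
  also have "\<dots> = ennreal (\<tau> + e * t)"
    using assms by (simp add: nn_integral_add nn_integral_cmult e_def ennreal_plus ennreal_mult)
  also have "\<dots> \<le> ennreal (\<tau> + T * e)"
    using assms by (intro ennreal_leI) (simp add: e_def)
  finally show ?thesis by (simp add: e_def)
qed

lemma exp_weight_Lq_le_min:
  fixes q r T :: real
  assumes "0 < q" "0 < r"
  obtains \<sigma> where "0 \<le> \<sigma>"
    and "\<And>t. 0 < t \<Longrightarrow> t \<le> T \<Longrightarrow>
           (\<integral>\<^sup>+ s. ennreal (exp (\<sigma> * (s - t)) powr q * indicator {0<..<t} s) \<partial>lborel) \<le> ennreal (min t r)"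
proof -
  define \<tau> where "\<tau> = r / 2"
  have "0 < \<tau>" using assms by (simp add: \<tau>_def)
  have "((\<lambda>\<sigma>. T * exp (- (q * \<sigma> * \<tau>))) \<longlongrightarrow> 0) at_top"
    using assms unfolding \<tau>_def by real_asymp
  then have "\<forall>\<^sub>F \<sigma> in at_top. 0 \<le> \<sigma> \<and> T * exp (- (q * \<sigma> * \<tau>)) < \<tau>"
    using \<open>0 < \<tau>\<close> by (intro eventually_conj eventually_ge_at_top order_tendstoD(2)) auto
  then obtain \<sigma> where \<sigma>: "0 \<le> \<sigma>" "T * exp (- (q * \<sigma> * \<tau>)) < \<tau>"
    using eventually_happens' trivial_limit_at_top_linorder by blast
  show thesis
  proof (rule that[OF \<sigma>(1)])
    fix t assume t: "0 < t" "t \<le> T"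
    show "(\<integral>\<^sup>+ s. ennreal (exp (\<sigma> * (s - t)) powr q * indicator {0<..<t} s) \<partial>lborel) \<le> ennreal (min t r)"
    proof (cases "t \<le> r")
      case True
      then show ?thesis using exp_weight_Lq_le_length[of q \<sigma> t] assms \<sigma> t by simp
    next
      case False
      have window: "ennreal (\<tau> + T * exp (- (q * \<sigma> * \<tau>))) \<le> ennreal (min t r)"
        using \<sigma> False by (intro ennreal_leI) (simp add: \<tau>_def)
      show ?thesis
        by (rule order_trans[OF exp_weight_Lq_le_window window]) (use assms \<sigma> t \<open>0 < \<tau>\<close> in auto)
    qed
  qed
qed

lemma powr_mult_min_powr_le:
  fixes t T r \<beta> \<rho> :: real
  assumes "0 < t" "t \<le> T" "0 < r" "0 < \<rho>" "0 < \<beta> + \<rho>"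
  shows "t powr \<beta> * min t r powr \<rho> \<le> T powr \<beta> * r powr \<rho> + r powr (\<beta> + \<rho>)"
proof (cases "0 \<le> \<beta>")
  case True
  have "t powr \<beta> * min t r powr \<rho> \<le> T powr \<beta> * r powr \<rho>"
    using assms True by (intro mult_mono powr_mono2) auto
  then show ?thesis by (simp add: add_increasing2)
next
  case False
  have "t powr \<beta> * min t r powr \<rho> \<le> min t r powr \<beta> * min t r powr \<rho>"
    using assms False by (intro mult_right_mono powr_mono2') auto
  also have "\<dots> \<le> r powr (\<beta> + \<rho>)"
    using assms by (simp add: powr_add[symmetric] powr_mono2)
  finally show ?thesis by (simp add: add_increasing)
qed

lemma kernel_zero_extension_measurable:
  fixes k :: "real \<Rightarrow> real \<Rightarrow> real"
  assumes "(\<lambda>(t, s). k t s) \<in> borel_measurable (restrict_space borel ({0<..} \<times> {0<..}))"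
  shows "(\<lambda>x. indicator ({0<..} \<times> {0<..}) x *\<^sub>R (case x of (t, s) \<Rightarrow> k t s)) \<in> borel_measurable borel"
proof -
  have "{0<..} \<times> {0<..} \<in> sets (borel :: (real \<times> real) measure)"
    by (intro borel_open open_Times) auto
  then show ?thesis
    using assms by (subst (asm) borel_measurable_restrict_space_iff) auto
qed

lemma kernel_slice_measurable:
  fixes k :: "real \<Rightarrow> real \<Rightarrow> real"
  assumes "(\<lambda>(t, s). k t s) \<in> borel_measurable (restrict_space borel ({0<..} \<times> {0<..}))"
  shows "(\<lambda>s. k t s * indicator {0<..<t} s) \<in> borel_measurable borel"
proof -
  define K where "K = (\<lambda>x. indicator ({0<..} \<times> {0<..}) x *\<^sub>R (case x of (t, s) \<Rightarrow> k t s))"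
  have "(\<lambda>s::real. (t, s)) \<in> borel_measurable borel"
    by (intro borel_measurable_continuous_onI continuous_intros)
  then have "(\<lambda>s. K (t, s)) \<in> borel_measurable borel"
    using measurable_comp kernel_zero_extension_measurable[OF assms] unfolding K_def comp_def by blast
  then have "(\<lambda>s. K (t, s) * indicator {0<..<t} s) \<in> borel_measurable borel"
    by measurable
  moreover have "(\<lambda>s. K (t, s) * indicator {0<..<t} s) = (\<lambda>s. k t s * indicator {0<..<t} s)"
    by (auto simp: fun_eq_iff K_def indicator_def)
  ultimately show ?thesis by simp
qed

lemma volterra_measurable:
  fixes k :: "real \<Rightarrow> real \<Rightarrow> real"
  assumes "(\<lambda>(t, s). k t s) \<in> borel_measurable (restrict_space borel ({0<..} \<times> {0<..}))"
    and g: "g \<in> borel_measurable borel"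
  shows "volterra k g \<in> borel_measurable borel"
proof -
  define K where "K = (\<lambda>x. indicator ({0<..} \<times> {0<..}) x *\<^sub>R (case x of (t, s) \<Rightarrow> k t s))"
  have [measurable]: "K \<in> borel_measurable (lborel \<Otimes>\<^sub>M lborel)"
    unfolding K_def lborel_prod measurable_lborel2 by (rule kernel_zero_extension_measurable[OF assms(1)])
  have "{x::real \<times> real. 0 < snd x \<and> snd x < fst x} \<in> sets borel"
    by (intro borel_open open_Collect_conj open_Collect_less continuous_intros)
  then have [measurable]: "{x::real \<times> real. 0 < snd x \<and> snd x < fst x} \<in> sets (lborel \<Otimes>\<^sub>M lborel)"
    unfolding lborel_prod by simp
  have "(\<lambda>x. indicator {x. 0 < snd x \<and> snd x < fst x} x *\<^sub>R (complex_of_real (K x) * g (snd x)))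
      \<in> borel_measurable (lborel \<Otimes>\<^sub>M lborel)"
    using g by measurable
  moreover have "(\<lambda>x. indicator {x. 0 < snd x \<and> snd x < fst x} x *\<^sub>R (complex_of_real (K x) * g (snd x)))
      = (\<lambda>(t, s). indicator {0<..<t} s *\<^sub>R (complex_of_real (k t s) * g s))"
    by (auto simp: fun_eq_iff indicator_def K_def)
  ultimately have "(\<lambda>t. \<integral>s. indicator {0<..<t} s *\<^sub>R (complex_of_real (k t s) * g s) \<partial>lborel) \<in> borel_measurable lborel"
    by (intro lborel.borel_measurable_lebesgue_integral) simp
  then show ?thesis by (simp add: set_lebesgue_integral_def)
qed

lemma norm_volterra_le_nn_integral:
  "ennreal (norm (volterra k F t)) \<le> (\<integral>\<^sup>+ s. ennreal (\<bar>k t s\<bar> * norm (F s) * indicator {0<..<t} s) \<partial>lborel)"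
proof -
  have norm_eq: "ennreal (norm (indicator {0<..<t} s *\<^sub>R (complex_of_real (k t s) * F s)))
      = ennreal (\<bar>k t s\<bar> * norm (F s) * indicator {0<..<t} s)" for s
    by (auto simp: indicator_def norm_mult)
  show ?thesis
  proof (cases "set_integrable lborel {0<..<t} (\<lambda>s. complex_of_real (k t s) * F s)")
    case True
    then show ?thesis unfolding set_lebesgue_integral_def set_integrable_def
      by (subst norm_eq[symmetric]) (rule integral_norm_bound_ennreal)
  next
    case False
    then show ?thesis unfolding set_lebesgue_integral_def set_integrable_def
      by (simp add: not_integrable_integral_eq)
  qed
qed

locale weakly_singular_kernel =
  fixes k :: "real \<Rightarrow> real \<Rightarrow> real" and \<alpha> p q C T :: real
  assumes kernel_measurable: "(\<lambda>(t, s). k t s) \<in> borel_measurable (restrict_space borel ({0<..} \<times> {0<..}))"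
    and alpha_less_1: "\<alpha> < 1"
    and conjugate: "1 < p" "1 < q" "1/p + 1/q = 1"
    and T_pos: "0 < T" and C_pos: "0 < C"
    and Lp_bound: "\<And>t. t \<in> {0<..T} \<Longrightarrow> Lp_int k p t < \<infinity> \<and>
                     t powr (\<alpha> - 1/p) * enn2real (Lp_int k p t) powr (1/p) \<le> C"
begin

lemma abs_kernel_slice_measurable: "(\<lambda>s. \<bar>k t s\<bar> * indicator {0<..<t} s) \<in> borel_measurable borel"
  using borel_measurable_abs[OF kernel_slice_measurable[OF kernel_measurable]] by (simp add: abs_mult)

lemma Lp_int_le:
  assumes t: "t \<in> {0<..T}"
  shows "Lp_int k p t \<le> ennreal ((C * t powr (1/p - \<alpha>)) powr p)"
proof -
  define L where "L = enn2real (Lp_int k p t)"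
  have L: "Lp_int k p t = ennreal L" "0 \<le> L"
    using Lp_bound[OF t] by (auto simp: L_def ennreal_enn2real_if)
  have "L powr (1/p) = t powr (1/p - \<alpha>) * (t powr (\<alpha> - 1/p) * L powr (1/p))"
    using t by (simp add: powr_add[symmetric])
  also have "\<dots> \<le> t powr (1/p - \<alpha>) * C"
    using Lp_bound[OF t] by (intro mult_left_mono) (auto simp: L_def)
  finally have "(L powr (1/p)) powr p \<le> (C * t powr (1/p - \<alpha>)) powr p"
    using conjugate by (intro powr_mono2) (auto simp: mult.commute)
  then show ?thesis
    using L conjugate by (simp add: powr_powr)
qed

lemma kernel_weighted_L1_le:
  assumes t: "t \<in> {0<..T}" and w: "w \<in> borel_measurable borel" "\<And>s. 0 \<le> w s" and m: "0 < m"
    and w_Lq: "(\<integral>\<^sup>+ s. ennreal (w s powr q * indicator {0<..<t} s) \<partial>lborel) \<le> ennreal m"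
  shows "(\<integral>\<^sup>+ s. ennreal (\<bar>k t s\<bar> * w s * indicator {0<..<t} s) \<partial>lborel)
           \<le> ennreal (C * t powr (1/p - \<alpha>) * m powr (1/q))"
proof -
  define f where "f s = \<bar>k t s\<bar> * indicator {0<..<t} s" for s
  define g where "g s = w s * indicator {0<..<t} s" for s
  have "(\<integral>\<^sup>+ s. ennreal (f s powr p) \<partial>lborel) = Lp_int k p t"
    unfolding Lp_int_def f_def by (intro nn_integral_cong) (auto simp: indicator_def)
  then have f_Lp: "(\<integral>\<^sup>+ s. ennreal (f s powr p) \<partial>lborel) \<le> ennreal ((C * t powr (1/p - \<alpha>)) powr p)"
    using Lp_int_le[OF t] by simp
  have "(\<integral>\<^sup>+ s. ennreal (g s powr q) \<partial>lborel) = (\<integral>\<^sup>+ s. ennreal (w s powr q * indicator {0<..<t} s) \<partial>lborel)"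
    unfolding g_def by (intro nn_integral_cong) (auto simp: indicator_def)
  then have g_Lq: "(\<integral>\<^sup>+ s. ennreal (g s powr q) \<partial>lborel) \<le> ennreal ((m powr (1/q)) powr q)"
    using w_Lq m conjugate by (simp add: powr_powr)
  have "(\<integral>\<^sup>+ s. ennreal (f s * g s) \<partial>lborel) \<le> ennreal (C * t powr (1/p - \<alpha>) * m powr (1/q))"
    using abs_kernel_slice_measurable w t C_pos m
    by (intro nn_integral_Holder[OF conjugate _ _ _ _ _ _ f_Lp g_Lq]) (auto simp: f_def g_def)
  moreover have "(\<integral>\<^sup>+ s. ennreal (f s * g s) \<partial>lborel) = (\<integral>\<^sup>+ s. ennreal (\<bar>k t s\<bar> * w s * indicator {0<..<t} s) \<partial>lborel)"
    unfolding f_def g_def by (intro nn_integral_cong) (auto simp: indicator_def)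
  ultimately show ?thesis by simp
qed

lemma kernel_L1_le:
  assumes t: "t \<in> {0<..T}"
  shows "(\<integral>\<^sup>+ s. ennreal (\<bar>k t s\<bar> * indicator {0<..<t} s) \<partial>lborel) \<le> ennreal (C * T powr (1 - \<alpha>))"
proof -
  have exponent: "1/p - \<alpha> + 1/q = 1 - \<alpha>"
    using conjugate by simp
  have "(\<integral>\<^sup>+ s. ennreal (1 powr q * indicator {0<..<t} s) \<partial>lborel) = ennreal t"
    using t by (simp add: ennreal_indicator)
  then have "(\<integral>\<^sup>+ s. ennreal (\<bar>k t s\<bar> * 1 * indicator {0<..<t} s) \<partial>lborel)
      \<le> ennreal (C * t powr (1/p - \<alpha>) * t powr (1/q))"
    using t by (intro kernel_weighted_L1_le) auto
  also have "C * t powr (1/p - \<alpha>) * t powr (1/q) = C * t powr (1 - \<alpha>)"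
    unfolding mult.assoc powr_add[symmetric] exponent ..
  also have "ennreal (C * t powr (1 - \<alpha>)) \<le> ennreal (C * T powr (1 - \<alpha>))"
    using t C_pos alpha_less_1 by (intro ennreal_leI mult_left_mono powr_mono2) auto
  finally show ?thesis by simp
qed

lemma kernel_exp_weighted_L1_small:
  assumes "0 < \<delta>"
  obtains \<sigma> where "0 \<le> \<sigma>"
    and "\<And>t. t \<in> {0<..T} \<Longrightarrow>
           (\<integral>\<^sup>+ s. ennreal (\<bar>k t s\<bar> * exp (\<sigma> * (s - t)) * indicator {0<..<t} s) \<partial>lborel) \<le> ennreal \<delta>"
proof -
  define \<beta> where "\<beta> = 1/p - \<alpha>"
  have \<beta>: "\<beta> + 1/q = 1 - \<alpha>" "0 < 1 - \<alpha>"
    using conjugate alpha_less_1 by (auto simp: \<beta>_def)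
  \<comment> \<open>\<open>B r\<close> bounds \<open>C t^\<beta> (min t r)^(1/q)\<close> uniformly in \<open>t \<in> (0,T]\<close> and vanishes as \<open>r \<rightarrow> 0\<close>.\<close>
  define B where "B r = C * (T powr \<beta> * r powr (1/q) + r powr (1 - \<alpha>))" for r
  have "(B \<longlongrightarrow> 0) (at_right 0)"
    unfolding B_def using \<beta> conjugate
    by (intro tendsto_mult_right_zero tendsto_add_zero tendsto_mult_left_zero tendsto_zero_powrI
        tendsto_ident_at eventually_at_right_less[THEN eventually_mono]) auto
  then have "\<forall>\<^sub>F r in at_right 0. 0 < r \<and> B r < \<delta>"
    using \<open>0 < \<delta>\<close> by (intro eventually_conj eventually_at_right_less order_tendstoD(2)) auto
  then obtain r where r: "0 < r" "B r < \<delta>"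
    using eventually_happens' trivial_limit_at_right_real by blast
  have "0 < q" using conjugate by simp
  obtain \<sigma> where "0 \<le> \<sigma>" and weight_Lq: "\<And>t. 0 < t \<Longrightarrow> t \<le> T \<Longrightarrow>
      (\<integral>\<^sup>+ s. ennreal (exp (\<sigma> * (s - t)) powr q * indicator {0<..<t} s) \<partial>lborel) \<le> ennreal (min t r)"
    by (rule exp_weight_Lq_le_min[of q r T, OF \<open>0 < q\<close> r(1)]) blast
  show thesis
  proof (rule that[OF \<open>0 \<le> \<sigma>\<close>])
    fix t assume t: "t \<in> {0<..T}"
    have "(\<integral>\<^sup>+ s. ennreal (\<bar>k t s\<bar> * exp (\<sigma> * (s - t)) * indicator {0<..<t} s) \<partial>lborel)
        \<le> ennreal (C * t powr \<beta> * min t r powr (1/q))"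
      using weight_Lq t r unfolding \<beta>_def by (intro kernel_weighted_L1_le) auto
    moreover have "t powr \<beta> * min t r powr (1/q) \<le> T powr \<beta> * r powr (1/q) + r powr (1 - \<alpha>)"
      using powr_mult_min_powr_le[of t T r "1/q" \<beta>] t r conjugate \<beta> by simp
    then have "C * (t powr \<beta> * min t r powr (1/q)) \<le> C * (T powr \<beta> * r powr (1/q) + r powr (1 - \<alpha>))"
      using C_pos by (intro mult_left_mono) auto
    then have "C * t powr \<beta> * min t r powr (1/q) \<le> \<delta>"
      using r(2) unfolding B_def mult.assoc by linarith
    ultimately show "(\<integral>\<^sup>+ s. ennreal (\<bar>k t s\<bar> * exp (\<sigma> * (s - t)) * indicator {0<..<t} s) \<partial>lborel)
        \<le> ennreal \<delta>"
      by (rule order_trans[OF _ ennreal_leI])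
  qed
qed

lemma nn_integral_kernel_bounded_le:
  assumes t: "t \<in> {0<..T}" and M: "\<And>s. norm (F s) \<le> M"
  shows "(\<integral>\<^sup>+ s. ennreal (\<bar>k t s\<bar> * norm (F s) * indicator {0<..<t} s) \<partial>lborel)
           \<le> ennreal (M * (C * T powr (1 - \<alpha>)))"
proof -
  have "0 \<le> M" using M[of 0] norm_ge_zero order_trans by blast
  have "(\<integral>\<^sup>+ s. ennreal (\<bar>k t s\<bar> * norm (F s) * indicator {0<..<t} s) \<partial>lborel)
      \<le> (\<integral>\<^sup>+ s. ennreal M * ennreal (\<bar>k t s\<bar> * indicator {0<..<t} s) \<partial>lborel)"
    using M \<open>0 \<le> M\<close>
    by (intro nn_integral_mono) (auto simp: indicator_def mult.commute mult_right_mono simp flip: ennreal_mult)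
  also have "\<dots> = ennreal M * (\<integral>\<^sup>+ s. ennreal (\<bar>k t s\<bar> * indicator {0<..<t} s) \<partial>lborel)"
    using abs_kernel_slice_measurable by (simp add: nn_integral_cmult)
  also have "\<dots> \<le> ennreal M * ennreal (C * T powr (1 - \<alpha>))"
    using kernel_L1_le[OF t] by (intro mult_left_mono) auto
  also have "\<dots> = ennreal (M * (C * T powr (1 - \<alpha>)))"
    using \<open>0 \<le> M\<close> C_pos by (simp add: ennreal_mult)
  finally show ?thesis .
qed

lemma volterra_integrable:
  assumes t: "t \<in> {0<..T}" and F: "F \<in> borel_measurable borel" and M: "\<And>s. norm (F s) \<le> M"
  shows "set_integrable lborel {0<..<t} (\<lambda>s. complex_of_real (k t s) * F s)"
  unfolding set_integrable_def
proof (rule integrableI_bounded)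
  have "(\<lambda>s. complex_of_real (k t s * indicator {0<..<t} s) * F s) \<in> borel_measurable borel"
    using kernel_slice_measurable[OF kernel_measurable, of t] F by measurable
  moreover have "(\<lambda>s. complex_of_real (k t s * indicator {0<..<t} s) * F s)
      = (\<lambda>s. indicator {0<..<t} s *\<^sub>R (complex_of_real (k t s) * F s))"
    by (auto simp: fun_eq_iff indicator_def)
  ultimately show "(\<lambda>s. indicator {0<..<t} s *\<^sub>R (complex_of_real (k t s) * F s)) \<in> borel_measurable lborel"
    by simp
  have "(\<integral>\<^sup>+ s. ennreal (norm (indicator {0<..<t} s *\<^sub>R (complex_of_real (k t s) * F s))) \<partial>lborel)
      = (\<integral>\<^sup>+ s. ennreal (\<bar>k t s\<bar> * norm (F s) * indicator {0<..<t} s) \<partial>lborel)"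
    by (intro nn_integral_cong) (auto simp: indicator_def norm_mult)
  also have "\<dots> \<le> ennreal (M * (C * T powr (1 - \<alpha>)))"
    using t M by (rule nn_integral_kernel_bounded_le)
  also have "\<dots> < \<infinity>"
    by simp
  finally show "(\<integral>\<^sup>+ s. ennreal (norm (indicator {0<..<t} s *\<^sub>R (complex_of_real (k t s) * F s))) \<partial>lborel) < \<infinity>" .
qed

lemma norm_volterra_le:
  assumes "t \<in> {0<..T}" "\<And>s. norm (F s) \<le> M"
  shows "norm (volterra k F t) \<le> M * (C * T powr (1 - \<alpha>))"
proof -
  have "0 \<le> M" using assms(2)[of 0] norm_ge_zero order_trans by blast
  have "ennreal (norm (volterra k F t))
      \<le> (\<integral>\<^sup>+ s. ennreal (\<bar>k t s\<bar> * norm (F s) * indicator {0<..<t} s) \<partial>lborel)"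
    by (rule norm_volterra_le_nn_integral)
  also have "\<dots> \<le> ennreal (M * (C * T powr (1 - \<alpha>)))"
    using assms by (rule nn_integral_kernel_bounded_le)
  finally show ?thesis
    using \<open>0 \<le> M\<close> C_pos by (simp add: ennreal_le_iff)
qed

lemma R_op_Bb:
  assumes g: "g \<in> Bb T"
  shows "R_op k lam T g \<in> Bb T"
proof -
  obtain M where "0 \<le> M" and M: "\<And>s. norm (g s) \<le> M" using Bb_normE[OF g] by blast
  have g_meas: "g \<in> borel_measurable borel" by (rule Bb_borel_measurable[OF g])
  have [measurable]: "volterra k g \<in> borel_measurable borel"
    by (rule volterra_measurable[OF kernel_measurable g_meas])
  have R_eq: "R_op k lam T g = (\<lambda>t. if t = 0 then 1 else if t \<in> {0<..T} then 1 - lam * volterra k g t else 0)"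
    by (simp add: fun_eq_iff R_op_def)
  have "R_op k lam T g \<in> borel_measurable borel"
    unfolding R_eq by measurable
  then have "R_op k lam T g \<in> borel_measurable (restrict_space borel {0..T})"
    by (rule measurable_restrict_space1)
  moreover have "norm (R_op k lam T g t) \<le> 1 + norm lam * (M * (C * T powr (1 - \<alpha>)))" if "t \<in> {0..T}" for t
  proof (cases "t = 0")
    case True
    then show ?thesis using \<open>0 \<le> M\<close> C_pos by (simp add: R_op_def add_increasing2)
  next
    case False
    then have t: "t \<in> {0<..T}" using that by auto
    have "norm (lam * volterra k g t) \<le> norm lam * (M * (C * T powr (1 - \<alpha>)))"
      unfolding norm_mult by (intro mult_left_mono norm_volterra_le[OF t M]) auto
    then show ?thesis
      using t False norm_triangle_ineq4[of 1 "lam * volterra k g t"] by (simp add: R_op_def)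
  qed
  then have "bounded (R_op k lam T g ` {0..T})"
    unfolding bounded_iff by blast
  moreover have "\<forall>t. t \<notin> {0..T} \<longrightarrow> R_op k lam T g t = 0"
    using T_pos by (auto simp: R_op_def)
  ultimately show ?thesis by (simp add: Bb_def)
qed

lemma R_op_iterate_Bb: "g \<in> Bb T \<Longrightarrow> (R_op k lam T ^^ n) g \<in> Bb T"
  by (induction n) (auto intro: R_op_Bb)

lemma R_op_diff:
  assumes G: "G \<in> Bb T" and H: "H \<in> Bb T" and t: "t \<in> {0<..T}"
  shows "R_op k lam T G t - R_op k lam T H t = - lam * volterra k (\<lambda>s. G s - H s) t"
proof -
  obtain M1 M2 where "\<And>s. norm (G s) \<le> M1" "\<And>s. norm (H s) \<le> M2"
    using Bb_normE G H by metis
  then have "set_integrable lborel {0<..<t} (\<lambda>s. complex_of_real (k t s) * G s)"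
    and "set_integrable lborel {0<..<t} (\<lambda>s. complex_of_real (k t s) * H s)"
    using volterra_integrable[OF t] Bb_borel_measurable G H by blast+
  then have diff: "volterra k (\<lambda>s. G s - H s) t = volterra k G t - volterra k H t"
    unfolding right_diff_distrib by (rule set_integral_diff(2))
  have "R_op k lam T G t - R_op k lam T H t = - lam * (volterra k G t - volterra k H t)"
    using t by (simp add: R_op_def algebra_simps)
  then show ?thesis
    by (simp only: diff)
qed

lemma norm_volterra_weighted_le:
  assumes K: "\<And>t. t \<in> {0<..T} \<Longrightarrow>
                (\<integral>\<^sup>+ s. ennreal (\<bar>k t s\<bar> * exp (\<sigma> * (s - t)) * indicator {0<..<t} s) \<partial>lborel) \<le> ennreal \<delta>"
    and "0 \<le> \<delta>" "0 \<le> X" and t: "t \<in> {0<..T}"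
    and F: "\<And>s. s \<in> {0<..<t} \<Longrightarrow> norm (F s) \<le> X * exp (\<sigma> * s)"
  shows "norm (volterra k F t) \<le> X * exp (\<sigma> * t) * \<delta>"
proof -
  define Y where "Y = X * exp (\<sigma> * t)"
  have "0 \<le> Y" using \<open>0 \<le> X\<close> by (simp add: Y_def)
  have "ennreal (norm (volterra k F t))
      \<le> (\<integral>\<^sup>+ s. ennreal (\<bar>k t s\<bar> * norm (F s) * indicator {0<..<t} s) \<partial>lborel)"
    by (rule norm_volterra_le_nn_integral)
  also have "\<dots> \<le> (\<integral>\<^sup>+ s. ennreal Y * ennreal (\<bar>k t s\<bar> * exp (\<sigma> * (s - t)) * indicator {0<..<t} s) \<partial>lborel)"
  proof (intro nn_integral_mono)
    fix s
    have "norm (F s) \<le> Y * exp (\<sigma> * (s - t))" if "s \<in> {0<..<t}"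
      using F[OF that] by (simp add: Y_def right_diff_distrib exp_diff)
    then have "\<bar>k t s\<bar> * norm (F s) \<le> \<bar>k t s\<bar> * (Y * exp (\<sigma> * (s - t)))" if "s \<in> {0<..<t}"
      using that by (intro mult_left_mono) auto
    then have "\<bar>k t s\<bar> * norm (F s) * indicator {0<..<t} s
        \<le> Y * (\<bar>k t s\<bar> * exp (\<sigma> * (s - t)) * indicator {0<..<t} s)"
      by (auto simp: indicator_def mult_ac)
    then show "ennreal (\<bar>k t s\<bar> * norm (F s) * indicator {0<..<t} s)
        \<le> ennreal Y * ennreal (\<bar>k t s\<bar> * exp (\<sigma> * (s - t)) * indicator {0<..<t} s)"
      using \<open>0 \<le> Y\<close> by (simp flip: ennreal_mult)
  qed
  also have "\<dots> = ennreal Y * (\<integral>\<^sup>+ s. ennreal (\<bar>k t s\<bar> * exp (\<sigma> * (s - t)) * indicator {0<..<t} s) \<partial>lborel)"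
  proof (rule nn_integral_cmult)
    have "(\<lambda>s. \<bar>k t s\<bar> * indicator {0<..<t} s * exp (\<sigma> * (s - t))) \<in> borel_measurable borel"
      using abs_kernel_slice_measurable[of t] by measurable
    then show "(\<lambda>s. ennreal (\<bar>k t s\<bar> * exp (\<sigma> * (s - t)) * indicator {0<..<t} s)) \<in> borel_measurable lborel"
      by (simp add: mult_ac)
  qed
  also have "\<dots> \<le> ennreal Y * ennreal \<delta>"
    using K[OF t] by (rule mult_left_mono) simp
  also have "\<dots> = ennreal (Y * \<delta>)"
    by (simp only: ennreal_mult[OF \<open>0 \<le> Y\<close> \<open>0 \<le> \<delta>\<close>])
  finally have "norm (volterra k F t) \<le> Y * \<delta>"
    using \<open>0 \<le> Y\<close> \<open>0 \<le> \<delta>\<close> by (simp add: ennreal_le_iff)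
  then show ?thesis by (simp add: Y_def)
qed

lemma R_op_weighted_Lipschitz:
  assumes K: "\<And>t. t \<in> {0<..T} \<Longrightarrow>
                (\<integral>\<^sup>+ s. ennreal (\<bar>k t s\<bar> * exp (\<sigma> * (s - t)) * indicator {0<..<t} s) \<partial>lborel) \<le> ennreal \<delta>"
    and "0 \<le> \<delta>" and G: "G \<in> Bb T" and H: "H \<in> Bb T" and "0 \<le> X"
    and GH: "\<And>s. s \<in> {0..T} \<Longrightarrow> norm (G s - H s) \<le> X * exp (\<sigma> * s)"
    and t: "t \<in> {0..T}"
  shows "norm (R_op k lam T G t - R_op k lam T H t) \<le> norm lam * \<delta> * X * exp (\<sigma> * t)"
proof (cases "t = 0")
  case True
  then show ?thesis using \<open>0 \<le> \<delta>\<close> \<open>0 \<le> X\<close> by (simp add: R_op_def)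
next
  case False
  then have t: "t \<in> {0<..T}" using t by auto
  have "norm (volterra k (\<lambda>s. G s - H s) t) \<le> X * exp (\<sigma> * t) * \<delta>"
    using GH t by (intro norm_volterra_weighted_le[OF K \<open>0 \<le> \<delta>\<close> \<open>0 \<le> X\<close> t]) auto
  then have "norm lam * norm (volterra k (\<lambda>s. G s - H s) t) \<le> norm lam * (X * exp (\<sigma> * t) * \<delta>)"
    by (rule mult_left_mono) simp
  then show ?thesis
    unfolding R_op_diff[OF G H t] norm_mult norm_minus_cancel by (simp add: mult_ac)
qed

lemma R_op_iterate_weighted_le:
  assumes K: "\<And>t. t \<in> {0<..T} \<Longrightarrow>
                (\<integral>\<^sup>+ s. ennreal (\<bar>k t s\<bar> * exp (\<sigma> * (s - t)) * indicator {0<..<t} s) \<partial>lborel) \<le> ennreal \<delta>"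
    and "0 \<le> \<delta>" "0 \<le> \<sigma>" and g: "g \<in> Bb T" and h: "h \<in> Bb T"
  shows "t \<in> {0..T} \<Longrightarrow> norm ((R_op k lam T ^^ n) g t - (R_op k lam T ^^ n) h t)
           \<le> (norm lam * \<delta>) ^ n * supnorm T (g - h) * exp (\<sigma> * t)"
proof (induction n arbitrary: t)
  case 0
  have "0 \<le> supnorm T (g - h)"
    using supnorm_diff_nonneg T_pos g h by simp
  moreover have "1 \<le> exp (\<sigma> * t)"
    using \<open>0 \<le> \<sigma>\<close> 0 by simp
  ultimately have "supnorm T (g - h) \<le> supnorm T (g - h) * exp (\<sigma> * t)"
    by (simp add: mult_le_cancel_left1)
  then show ?case
    using norm_le_supnorm[OF Bb_diff_bounded[OF g h] 0] by (simp add: fun_diff_def)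
next
  case (Suc n)
  have "0 \<le> supnorm T (g - h)"
    using supnorm_diff_nonneg T_pos g h by simp
  then have "0 \<le> (norm lam * \<delta>) ^ n * supnorm T (g - h)"
    using \<open>0 \<le> \<delta>\<close> by simp
  from R_op_weighted_Lipschitz[OF K \<open>0 \<le> \<delta>\<close> R_op_iterate_Bb[OF g] R_op_iterate_Bb[OF h] this Suc.IH Suc.prems]
  show ?case
    by (simp add: mult_ac)
qed

lemma R_op_iterate_contraction:
  "\<exists>n::nat. \<exists>c::real. c < 1 \<and>
     (\<forall>g\<in>Bb T. \<forall>h\<in>Bb T. supnorm T ((R_op k lam T ^^ n) g - (R_op k lam T ^^ n) h) \<le> c * supnorm T (g - h))"
proof -
  define \<delta> where "\<delta> = 1 / (norm lam + 1)"
  have "0 < \<delta>" and L: "norm lam * \<delta> < 1"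
    by (simp_all add: \<delta>_def add_pos_nonneg field_simps)
  obtain \<sigma> where "0 \<le> \<sigma>" and K: "\<And>t. t \<in> {0<..T} \<Longrightarrow>
      (\<integral>\<^sup>+ s. ennreal (\<bar>k t s\<bar> * exp (\<sigma> * (s - t)) * indicator {0<..<t} s) \<partial>lborel) \<le> ennreal \<delta>"
    using kernel_exp_weighted_L1_small[OF \<open>0 < \<delta>\<close>] by blast
  obtain n where n: "(norm lam * \<delta>) ^ n < exp (- (\<sigma> * T))"
    using real_arch_pow_inv[OF exp_gt_zero L] by blast
  define c where "c = (norm lam * \<delta>) ^ n * exp (\<sigma> * T)"
  have "c < 1"
    using n by (simp add: c_def exp_minus field_simps)
  moreover have "supnorm T ((R_op k lam T ^^ n) g - (R_op k lam T ^^ n) h) \<le> c * supnorm T (g - h)"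
    if g: "g \<in> Bb T" and h: "h \<in> Bb T" for g h
  proof (rule supnorm_le)
    show "0 \<le> T" using T_pos by simp
    have "0 \<le> supnorm T (g - h)"
      using supnorm_diff_nonneg T_pos g h by simp
    fix t assume t: "t \<in> {0..T}"
    have "norm (((R_op k lam T ^^ n) g - (R_op k lam T ^^ n) h) t)
        \<le> (norm lam * \<delta>) ^ n * supnorm T (g - h) * exp (\<sigma> * t)"
      using R_op_iterate_weighted_le[OF K _ \<open>0 \<le> \<sigma>\<close> g h t] \<open>0 < \<delta>\<close> by simp
    also have "\<dots> \<le> (norm lam * \<delta>) ^ n * supnorm T (g - h) * exp (\<sigma> * T)"
      using t \<open>0 \<le> \<sigma>\<close> \<open>0 < \<delta>\<close> \<open>0 \<le> supnorm T (g - h)\<close>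
      by (intro mult_left_mono) (auto simp: mult_left_mono)
    finally show "norm (((R_op k lam T ^^ n) g - (R_op k lam T ^^ n) h) t) \<le> c * supnorm T (g - h)"
      by (simp add: c_def mult_ac)
  qed
  ultimately show ?thesis by blast
qed

end

theorem lemma3p1:
  fixes k :: "real \<Rightarrow> real \<Rightarrow> real" and \<alpha> \<epsilon> :: real
  assumes meas: "(\<lambda>(t, s). k t s) \<in> borel_measurable (restrict_space borel ({0<..} \<times> {0<..}))"
    and alpha: "0 \<le> \<alpha>" "\<alpha> < 1"
    and eps: "\<epsilon> > 0"
    and KT: "\<And>T. T > 0 \<Longrightarrow> \<exists>C. \<forall>t\<in>{0<..T}.
               Lp_int k (1 + \<epsilon>) t < \<infinity> \<and>
               t powr (\<alpha> - 1 / (1 + \<epsilon>)) * enn2real (Lp_int k (1 + \<epsilon>) t) powr (1 / (1 + \<epsilon>)) \<le> C"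
  shows "\<forall>(lam::complex) (T::real). T > 0 \<longrightarrow>
           (\<forall>g\<in>Bb T. R_op k lam T g \<in> Bb T) \<and>
           (\<exists>n::nat. \<exists>q::real. q < 1 \<and>
              (\<forall>g\<in>Bb T. \<forall>h\<in>Bb T.
                 supnorm T ((R_op k lam T ^^ n) g - (R_op k lam T ^^ n) h) \<le> q * supnorm T (g - h)))"
proof (intro allI impI)
  fix lam :: complex and T :: real
  assume "T > 0"
  obtain C where C: "\<forall>t\<in>{0<..T}. Lp_int k (1 + \<epsilon>) t < \<infinity> \<and>
      t powr (\<alpha> - 1 / (1 + \<epsilon>)) * enn2real (Lp_int k (1 + \<epsilon>) t) powr (1 / (1 + \<epsilon>)) \<le> C"
    using KT[OF \<open>T > 0\<close>] by blast
  interpret weakly_singular_kernel k \<alpha> "1 + \<epsilon>" "(1 + \<epsilon>) / \<epsilon>" "max C 1" T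
  proof
    show "1 < (1 + \<epsilon>) / \<epsilon>" and "1 / (1 + \<epsilon>) + 1 / ((1 + \<epsilon>) / \<epsilon>) = 1"
      using eps by (simp_all add: field_simps)
  qed (use meas alpha(2) eps \<open>T > 0\<close> C in force)+
  show "(\<forall>g\<in>Bb T. R_op k lam T g \<in> Bb T) \<and>
      (\<exists>n::nat. \<exists>q::real. q < 1 \<and> (\<forall>g\<in>Bb T. \<forall>h\<in>Bb T.
         supnorm T ((R_op k lam T ^^ n) g - (R_op k lam T ^^ n) h) \<le> q * supnorm T (g - h)))"
    using R_op_Bb R_op_iterate_contraction by blast
qed

end
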